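(* Let $\Gamma$ be a connected locally finite graph with at most countably many vertices, $G<\mathrm{Aut}(\Gamma)$, and $G_1\supset G_2\supset\cdots$ a decreasing sequence of closed normal subgroups of $G$ with $G/G_i$ amenable and $\bigcap_i G_i=\{1\}$. Let $\pi_i:\Gamma\to\Gamma/G_i$ be the quotient maps and let $D_1\subset D_2\subset\cdots$ be connected subgraphs of $\Gamma$ with $\bigcup_i D_i=\Gamma$ such that $\pi_i$ restricted to the edge set of $D_i$ is a bijection onto the edge set of $\Gamma/G_i$. For each $i$ let $\mathcal{G}_i$ be a random subgraph (random subset of edges) of $\Gamma/G_i$, let $\tilde{\mathcal{G}}_i=\pi_i^{-1}(\mathcal{G}_i)$, and let $\hat{\mathcal{G}}_i$ be the random subgraph of $\Gamma$ contained in $D_i$ that agrees with $\tilde{\mathcal{G}}_i$ on $D_i$ (i.e. $\hat{\mathcal{G}}_i=\tilde{\mathcal{G}}_i\cap E(D_i)$). Let $\mathcal{G}$ be a random subgraph of $\Gamma$. Then $\tilde{\mathcal{G}}_i\to\mathcal{G}$ in the weak* sense if and only if $\hat{\mathcal{G}}_i\to\mathcal{G}$ in the weak* sense.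
   Context: The quotient graph $\Gamma/G_i$ has as vertices the $G_i$-orbits of vertices of $\Gamma$, and for each $G_i$-orbit $[e]$ of edges of $\Gamma$ with endpoints in orbits $[v],[w]$ it has an edge $[e]$ joining $[v]$ and $[w]$; $\pi_i$ sends vertices and edges to their orbits. Random subgraphs of $\Gamma$ are random elements of $2^{E(\Gamma)}$ (product topology); $\mathcal{G}_i\to\mathcal{G}$ weak* means the laws converge in the weak* topology on Borel probability measures on $2^{E(\Gamma)}$, equivalently $\Pr(B\subset\mathcal{G}_i)\to\Pr(B\subset\mathcal{G})$ for every finite $B\subset E(\Gamma)$. *)

theory Defs
  imports "HOL-Algebra.Coset" "HOL-Probability.Probability"
begin

definition simple_graph :: "'v set \<Rightarrow> 'v set set \<Rightarrow> bool" where
  "simple_graph V E \<longleftrightarrow> (\<forall>e\<in>E. e \<subseteq> V \<and> card e = 2)"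

definition graph_connected :: "'v set \<Rightarrow> 'v set set \<Rightarrow> bool" where
  "graph_connected V E \<longleftrightarrow> (\<forall>u\<in>V. \<forall>w\<in>V. (\<lambda>x y. {x, y} \<in> E)\<^sup>*\<^sup>* u w)"

definition locally_finite :: "'v set \<Rightarrow> 'v set set \<Rightarrow> bool" where
  "locally_finite V E \<longleftrightarrow> (\<forall>v\<in>V. finite {e\<in>E. v \<in> e})"

definition auts :: "'v set \<Rightarrow> 'v set set \<Rightarrow> ('v \<Rightarrow> 'v) set" where
  "auts V E = {f. bij_betw f V V \<and> (\<forall>x. x \<notin> V \<longrightarrow> f x = x)
                 \<and> (\<forall>e. e \<subseteq> V \<longrightarrow> (e \<in> E \<longleftrightarrow> f ` e \<in> E))}"

definition aut_group :: "'v set \<Rightarrow> 'v set set \<Rightarrow> ('v \<Rightarrow> 'v) monoid" where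
  "aut_group V E = \<lparr>carrier = auts V E, monoid.mult = (\<circ>), one = id\<rparr>"

text \<open>Topology of pointwise convergence (V discrete) on a set G of permutations.\<close>

definition perm_top :: "'v set \<Rightarrow> ('v \<Rightarrow> 'v) set \<Rightarrow> ('v \<Rightarrow> 'v) topology" where
  "perm_top V G = topology (\<lambda>U. U \<subseteq> G \<and>
     (\<forall>g\<in>U. \<exists>F. finite F \<and> F \<subseteq> V \<and> {h\<in>G. \<forall>x\<in>F. h x = g x} \<subseteq> U))"

definition quot_top :: "'a topology \<Rightarrow> 'a set set \<Rightarrow> 'a set topology" where
  "quot_top T Q = topology (\<lambda>U. U \<subseteq> Q \<and> openin T (\<Union>U))"

text \<open>Bounded left uniformly continuous functions (g \<mapsto> left translate of f is
  norm-continuous), extended by 0 outside the carrier.\<close>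

definition LUC :: "('a, 'b) monoid_scheme \<Rightarrow> 'a topology \<Rightarrow> ('a \<Rightarrow> real) set" where
  "LUC Q T = {f. (\<forall>x. x \<notin> carrier Q \<longrightarrow> f x = 0) \<and> (\<exists>B. \<forall>x\<in>carrier Q. \<bar>f x\<bar> \<le> B) \<and>
     (\<forall>\<epsilon>>0. \<exists>U. openin T U \<and> \<one>\<^bsub>Q\<^esub> \<in> U \<and>
        (\<forall>u\<in>U. \<forall>x\<in>carrier Q. \<bar>f (u \<otimes>\<^bsub>Q\<^esub> x) - f x\<bar> < \<epsilon>))}"

definition amenable :: "('a, 'b) monoid_scheme \<Rightarrow> 'a topology \<Rightarrow> bool" where
  "amenable Q T \<longleftrightarrow> (\<exists>m :: ('a \<Rightarrow> real) \<Rightarrow> real.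
     (\<forall>f\<in>LUC Q T. \<forall>g\<in>LUC Q T. \<forall>a b. m (\<lambda>x. a * f x + b * g x) = a * m f + b * m g) \<and>
     m (\<lambda>x. if x \<in> carrier Q then 1 else 0) = 1 \<and>
     (\<forall>f\<in>LUC Q T. (\<forall>x\<in>carrier Q. 0 \<le> f x) \<longrightarrow> 0 \<le> m f) \<and>
     (\<forall>g\<in>carrier Q. \<forall>f\<in>LUC Q T.
        m (\<lambda>x. if x \<in> carrier Q then f (g \<otimes>\<^bsub>Q\<^esub> x) else 0) = m f))"

definition edge_orbit :: "('v \<Rightarrow> 'v) set \<Rightarrow> 'v set \<Rightarrow> 'v set set" where
  "edge_orbit N e = (\<lambda>g. g ` e) ` N"

text \<open>Edge set of the quotient graph \<Gamma>/N; \<pi>_N on edges is edge_orbit N.\<close>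

definition quot_edges :: "'v set set \<Rightarrow> ('v \<Rightarrow> 'v) set \<Rightarrow> 'v set set set" where
  "quot_edges E N = edge_orbit N ` E"

definition lift_sub :: "'v set set \<Rightarrow> ('v \<Rightarrow> 'v) set \<Rightarrow> 'v set set set \<Rightarrow> 'v set set" where
  "lift_sub E N S = {e\<in>E. edge_orbit N e \<in> S}"

text \<open>The space 2^E with its product (= Borel, E countable) sigma algebra,
  and its product topology.\<close>

definition subgraph_space :: "'e set \<Rightarrow> 'e set measure" where
  "subgraph_space E = sigma (Pow E) {{S\<in>Pow E. e \<in> S} | e. e \<in> E}"

definition subgraph_top :: "'e set \<Rightarrow> 'e set topology" where
  "subgraph_top E = topology (\<lambda>U. U \<subseteq> Pow E \<and>
     (\<forall>S\<in>U. \<exists>F. finite F \<and> F \<subseteq> E \<and> {T\<in>Pow E. T \<inter> F = S \<inter> F} \<subseteq> U))"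

definition weak_star_conv :: "'e set \<Rightarrow> (nat \<Rightarrow> 'e set measure) \<Rightarrow> 'e set measure \<Rightarrow> bool" where
  "weak_star_conv E Ms M \<longleftrightarrow>
     (\<forall>f. continuous_map (subgraph_top E) euclideanreal f \<and> (\<exists>B. \<forall>S\<in>Pow E. \<bar>f S\<bar> \<le> B)
        \<longrightarrow> (\<lambda>i. \<integral>S. f S \<partial>Ms i) \<longlonglongrightarrow> (\<integral>S. f S \<partial>M))"

end

theory Submission
  imports Defs
begin

(* The lift of the i-th random subgraph and its truncation to D_i agree on every
   edge of D_i, and any finite edge set lies in D_i for all large i because the D_i
   increase and exhaust the edges of Gamma.  A continuous function on the compact
   space 2^E is uniformly approximated by functions of finitely many edges, so its
   expectations under the two laws differ by an amount tending to 0. *)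

definition cylinder :: "'e set \<Rightarrow> 'e set \<Rightarrow> 'e set \<Rightarrow> 'e set set" where
  "cylinder E F S = {T\<in>Pow E. T \<inter> F = S \<inter> F}"

lemma cylinder_Un: "cylinder E (F1 \<union> F2) S \<subseteq> cylinder E F1 S \<inter> cylinder E F2 S"
  by (auto simp: cylinder_def)

lemma self_in_cylinder: "S \<in> Pow E \<Longrightarrow> S \<in> cylinder E F S"
  by (simp add: cylinder_def)

lemma openin_subgraph_top:
  "openin (subgraph_top E) U \<longleftrightarrow>
     U \<subseteq> Pow E \<and> (\<forall>S\<in>U. \<exists>F. finite F \<and> F \<subseteq> E \<and> cylinder E F S \<subseteq> U)"
proof -
  let ?open = "\<lambda>U. U \<subseteq> Pow E \<and> (\<forall>S\<in>U. \<exists>F. finite F \<and> F \<subseteq> E \<and> cylinder E F S \<subseteq> U)"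
  have "istopology ?open"
    unfolding istopology_def
  proof (rule conjI; intro allI impI)
    fix U W assume U: "?open U" and W: "?open W"
    have "\<exists>F. finite F \<and> F \<subseteq> E \<and> cylinder E F S \<subseteq> U \<inter> W" if "S \<in> U \<inter> W" for S
    proof -
      obtain F1 F2 where "finite F1" "F1 \<subseteq> E" "cylinder E F1 S \<subseteq> U"
        "finite F2" "F2 \<subseteq> E" "cylinder E F2 S \<subseteq> W"
        using U W \<open>S \<in> U \<inter> W\<close> by (meson IntD1 IntD2)
      then show ?thesis
        using cylinder_Un[of E F1 F2 S] by (intro exI[of _ "F1 \<union> F2"]) auto
    qed
    then show "?open (U \<inter> W)" using U by auto
  next
    fix K assume "\<forall>U\<in>K. ?open U"
    then show "?open (\<Union>K)" by (meson Union_iff Union_least Union_upper order_trans)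
  qed
  then show ?thesis by (simp add: subgraph_top_def cylinder_def)
qed

lemma openin_subgraph_topD:
  "openin (subgraph_top E) U \<Longrightarrow> S \<in> U \<Longrightarrow> \<exists>F. finite F \<and> F \<subseteq> E \<and> cylinder E F S \<subseteq> U"
  unfolding openin_subgraph_top by (elim conjE) (rule bspec)

lemma openin_subgraph_top_cylinder:
  "finite F \<Longrightarrow> F \<subseteq> E \<Longrightarrow> openin (subgraph_top E) (cylinder E F S)"
  unfolding openin_subgraph_top by (intro conjI ballI exI[of _ F]) (auto simp: cylinder_def)

lemma topspace_subgraph_top: "topspace (subgraph_top E) = Pow E"
proof -
  have "openin (subgraph_top E) (Pow E)"
    using openin_subgraph_top_cylinder[of "{}" E] by (simp add: cylinder_def Pow_def)
  moreover have "topspace (subgraph_top E) \<subseteq> Pow E"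
    using openin_subgraph_top[of E "topspace (subgraph_top E)"] by simp
  ultimately show ?thesis by (simp add: openin_subset subset_antisym)
qed

lemma continuous_map_product_topology_subgraph_top:
  "continuous_map (product_topology (\<lambda>_. discrete_topology UNIV) E) (subgraph_top E)
     (\<lambda>g. {e\<in>E. g e})"
  unfolding continuous_map_def
proof (intro conjI allI impI)
  let ?P = "product_topology (\<lambda>_. discrete_topology (UNIV :: bool set)) E"
  show "(\<lambda>g. {e\<in>E. g e}) \<in> topspace ?P \<rightarrow> topspace (subgraph_top E)"
    by (auto simp: topspace_subgraph_top)
  fix U assume U: "openin (subgraph_top E) U"
  show "openin ?P {g \<in> topspace ?P. {e\<in>E. g e} \<in> U}"
    unfolding openin_product_topology_alt
  proof (intro ballI)
    fix g assume g: "g \<in> {g \<in> topspace ?P. {e\<in>E. g e} \<in> U}"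
    then obtain F where F: "finite F" "F \<subseteq> E" "cylinder E F {e\<in>E. g e} \<subseteq> U"
      using openin_subgraph_topD[OF U] by blast
    define W where "W e = (if e \<in> F then {g e} else UNIV)" for e
    have "finite {e \<in> E. W e \<noteq> topspace (discrete_topology UNIV)}"
      by (rule finite_subset[OF _ F(1)]) (auto simp: W_def)
    moreover have "g \<in> Pi\<^sub>E E W" using g by (auto simp: W_def PiE_iff)
    moreover have "{e\<in>E. h e} \<in> cylinder E F {e\<in>E. g e}" if "h \<in> Pi\<^sub>E E W" for h
      using that F(2) by (auto simp: cylinder_def W_def PiE_iff)
    ultimately show "\<exists>W. finite {e \<in> E. W e \<noteq> topspace (discrete_topology UNIV)} \<and>
        (\<forall>e\<in>E. openin (discrete_topology UNIV) (W e)) \<and>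
        g \<in> Pi\<^sub>E E W \<and> Pi\<^sub>E E W \<subseteq> {g \<in> topspace ?P. {e\<in>E. g e} \<in> U}"
      using F(3) by (intro exI[of _ W]) (auto simp: PiE_iff)
  qed
qed

lemma compact_space_subgraph_top: "compact_space (subgraph_top E)"
proof -
  let ?P = "product_topology (\<lambda>_. discrete_topology (UNIV :: bool set)) E"
  have "compact_space ?P"
    by (simp add: compact_space_product_topology compact_space_discrete_topology)
  then have "compactin (subgraph_top E) ((\<lambda>g. {e\<in>E. g e}) ` topspace ?P)"
    unfolding compact_space_def
    using continuous_map_product_topology_subgraph_top by (rule image_compactin)
  moreover have "(\<lambda>g. {e\<in>E. g e}) ` topspace ?P = Pow E"
  proof (intro subset_antisym subsetI)
    fix S assume "S \<in> Pow E"
    then have "S = {e\<in>E. restrict (\<lambda>e. e \<in> S) E e}" by auto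
    moreover have "restrict (\<lambda>e. e \<in> S) E \<in> topspace ?P" by simp
    ultimately show "S \<in> (\<lambda>g. {e\<in>E. g e}) ` topspace ?P" by (rule image_eqI)
  qed auto
  ultimately show ?thesis by (simp add: compact_space_def topspace_subgraph_top)
qed

lemma continuous_map_subgraph_top_cylinder:
  assumes f: "continuous_map (subgraph_top E) euclidean f" and S: "S \<in> Pow E" and "\<epsilon> > 0"
  obtains F where "finite F" "F \<subseteq> E" "\<And>T. T \<in> cylinder E F S \<Longrightarrow> dist (f T) (f S) < \<epsilon>"
proof -
  have "openin (subgraph_top E) {T \<in> Pow E. f T \<in> ball (f S) \<epsilon>}"
    using openin_continuous_map_preimage[OF f, of "ball (f S) \<epsilon>"]
    by (simp add: topspace_subgraph_top)
  moreover have "S \<in> {T \<in> Pow E. f T \<in> ball (f S) \<epsilon>}" using S \<open>\<epsilon> > 0\<close> by simp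
  ultimately obtain F where F: "finite F" "F \<subseteq> E"
    and "cylinder E F S \<subseteq> {T \<in> Pow E. f T \<in> ball (f S) \<epsilon>}"
    by (meson openin_subgraph_topD)
  then have "dist (f T) (f S) < \<epsilon>" if "T \<in> cylinder E F S" for T
    using that by (auto simp: dist_commute)
  then show ?thesis using that F by blast
qed

lemma continuous_map_subgraph_top_uniform:
  assumes f: "continuous_map (subgraph_top E) euclidean f" and "\<epsilon> > 0"
  shows "\<exists>F. finite F \<and> F \<subseteq> E \<and> (\<forall>S\<in>Pow E. \<forall>T\<in>cylinder E F S. dist (f S) (f T) < \<epsilon>)"
proof -
  have "\<exists>F. finite F \<and> F \<subseteq> E \<and> (\<forall>T \<in> cylinder E F S. dist (f T) (f S) < \<epsilon>/2)"
    if "S \<in> Pow E" for S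
    using continuous_map_subgraph_top_cylinder[OF f that half_gt_zero[OF \<open>\<epsilon> > 0\<close>]] by metis
  then obtain Fs where Fs: "\<And>S. S \<in> Pow E \<Longrightarrow> finite (Fs S) \<and> Fs S \<subseteq> E \<and>
      (\<forall>T \<in> cylinder E (Fs S) S. dist (f T) (f S) < \<epsilon>/2)"
    by metis
  let ?C = "\<lambda>S. cylinder E (Fs S) S"
  have "openin (subgraph_top E) (?C S)" if "S \<in> Pow E" for S
    using Fs[OF that] openin_subgraph_top_cylinder by blast
  then have "\<forall>U\<in>?C ` Pow E. openin (subgraph_top E) U" by blast
  moreover have "Pow E \<subseteq> \<Union>(?C ` Pow E)"
    using self_in_cylinder by (intro subsetI UN_I)
  ultimately obtain \<U> where \<U>: "finite \<U>" "\<U> \<subseteq> ?C ` Pow E" and "Pow E \<subseteq> \<Union>\<U>"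
    using compact_space_subgraph_top[of E]
    unfolding compact_space_def compactin_def topspace_subgraph_top by meson
  moreover obtain R where R: "finite R" "R \<subseteq> Pow E" "\<U> = ?C ` R"
    using finite_subset_image[OF \<U>] by blast
  ultimately have cover: "Pow E \<subseteq> (\<Union>S\<in>R. ?C S)" by simp
  show ?thesis
  proof (intro exI[of _ "\<Union>(Fs ` R)"] conjI ballI)
    show "finite (\<Union>(Fs ` R))" "\<Union>(Fs ` R) \<subseteq> E" using R Fs by blast+
  next
    fix S T assume "S \<in> Pow E" and T: "T \<in> cylinder E (\<Union>(Fs ` R)) S"
    then obtain P where P: "P \<in> R" "S \<in> ?C P" using cover by auto
    moreover have "T \<in> ?C P"
      using P T unfolding cylinder_def by blast
    ultimately have "dist (f S) (f P) < \<epsilon>/2" "dist (f T) (f P) < \<epsilon>/2"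
      using Fs R by blast+
    then show "dist (f S) (f T) < \<epsilon>" by (rule dist_triangle_half_l)
  qed
qed

lemma space_subgraph_space: "space (subgraph_space E) = Pow E"
  unfolding subgraph_space_def by (rule space_measure_of) blast

(* The short name pred is hidden by the imported theories, hence Measurable.pred. *)
lemma pred_subgraph_space_mem [measurable]:
  fixes e :: 'e and E :: "'e set"
  shows "Measurable.pred (subgraph_space E) (\<lambda>S. e \<in> S)"
proof (cases "e \<in> E")
  case True
  then have "{S \<in> Pow E. e \<in> S} \<in> sets (subgraph_space E)"
    unfolding subgraph_space_def by (subst sets_measure_of) (blast, rule sigma_sets.Basic, blast)
  then show ?thesis by (simp add: pred_def space_subgraph_space)
next
  case False
  then have "{S \<in> space (subgraph_space E). e \<in> S} = {}" by (auto simp: space_subgraph_space)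
  then show ?thesis unfolding pred_def by (metis sets.empty_sets)
qed

lemma measurable_subgraph_space:
  assumes "\<And>x. x \<in> space M \<Longrightarrow> g x \<subseteq> E" and "\<And>e. e \<in> E \<Longrightarrow> Measurable.pred M (\<lambda>x. e \<in> g x)"
  shows "g \<in> measurable M (subgraph_space E)"
  unfolding subgraph_space_def
proof (rule measurable_measure_of)
  fix A assume "A \<in> {{S \<in> Pow E. e \<in> S} | e. e \<in> E}"
  then obtain e where "e \<in> E" "A = {S \<in> Pow E. e \<in> S}" by blast
  then have "g -` A \<inter> space M = {x \<in> space M. e \<in> g x}" using assms(1) by auto
  then show "g -` A \<inter> space M \<in> sets M" using assms(2)[OF \<open>e \<in> E\<close>] by (simp add: pred_def)
qed (use assms(1) in auto)

lemma measurable_Int_count_space: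
  assumes "finite F"
  shows "(\<lambda>S. S \<inter> F) \<in> measurable (subgraph_space E) (count_space (Pow F))"
proof -
  have "Measurable.pred (subgraph_space E) (\<lambda>S. \<forall>e\<in>F. e \<in> S \<longleftrightarrow> e \<in> A)" for A
    using assms by measurable
  moreover have "(\<lambda>S. S \<inter> F) -` {A} \<inter> space (subgraph_space E) =
      {S \<in> space (subgraph_space E). \<forall>e\<in>F. e \<in> S \<longleftrightarrow> e \<in> A}" if "A \<in> Pow F" for A
    using that by auto
  ultimately show ?thesis
    using assms by (subst measurable_count_space_eq2) (auto simp: pred_def)
qed

lemma borel_measurable_restrict_subgraph_space:
  "finite F \<Longrightarrow> (\<lambda>S. f (S \<inter> F)) \<in> borel_measurable (subgraph_space E)"
  by (rule measurable_compose[OF measurable_Int_count_space]) simp_all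

lemma borel_measurable_continuous_map_subgraph_top:
  fixes f :: "'e set \<Rightarrow> 'b::metric_space"
  assumes f: "continuous_map (subgraph_top E) euclidean f"
  shows "f \<in> borel_measurable (subgraph_space E)"
proof -
  have "\<forall>n. \<exists>F. finite F \<and> F \<subseteq> E \<and>
      (\<forall>S\<in>Pow E. \<forall>T\<in>cylinder E F S. dist (f S) (f T) < inverse (real (Suc n)))"
    using continuous_map_subgraph_top_uniform[OF f] by simp
  then obtain F where F: "\<forall>n. finite (F n) \<and> F n \<subseteq> E \<and>
      (\<forall>S\<in>Pow E. \<forall>T\<in>cylinder E (F n) S. dist (f S) (f T) < inverse (real (Suc n)))"
    by (rule choice[THEN exE])
  show ?thesis
  proof (rule borel_measurable_LIMSEQ_metric[where f = "\<lambda>n S. f (S \<inter> F n)"])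
    show "(\<lambda>S. f (S \<inter> F n)) \<in> borel_measurable (subgraph_space E)" for n
      using F by (simp add: borel_measurable_restrict_subgraph_space)
  next
    fix S assume "S \<in> space (subgraph_space E)"
    then have S: "S \<in> Pow E" by (simp add: space_subgraph_space)
    have bound: "norm (dist (f (S \<inter> F n)) (f S)) \<le> inverse (real (Suc n))" for n
    proof -
      have "S \<inter> F n \<in> cylinder E (F n) S" using S by (auto simp: cylinder_def)
      then have "dist (f S) (f (S \<inter> F n)) < inverse (real (Suc n))" using F S by blast
      then show ?thesis by (simp add: dist_commute)
    qed
    show "(\<lambda>n. f (S \<inter> F n)) \<longlonglongrightarrow> f S"
      using Lim_null_comparison[OF always_eventually[OF allI[OF bound]] LIMSEQ_inverse_real_of_nat]
      by (rule tendsto_dist_iff[THEN iffD2])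
  qed
qed

lemma (in prob_space) abs_integral_distr_diff_le:
  fixes f :: "'b \<Rightarrow> real"
  assumes X: "X \<in> measurable M N" and Y: "Y \<in> measurable M N" and f: "f \<in> borel_measurable N"
    and bounded: "\<And>y. y \<in> space N \<Longrightarrow> \<bar>f y\<bar> \<le> B"
    and close: "\<And>x. x \<in> space M \<Longrightarrow> \<bar>f (X x) - f (Y x)\<bar> \<le> c"
  shows "\<bar>(\<integral>y. f y \<partial>distr M N X) - (\<integral>y. f y \<partial>distr M N Y)\<bar> \<le> c"
proof -
  have integrable: "integrable M (\<lambda>x. f (Z x))" if Z: "Z \<in> measurable M N" for Z
    using Z bounded measurable_space[OF Z]
    by (intro integrable_const_bound[where B = B]) (auto intro: measurable_compose[OF Z f])
  have "(\<integral>y. f y \<partial>distr M N X) - (\<integral>y. f y \<partial>distr M N Y) = (\<integral>x. f (X x) - f (Y x) \<partial>M)"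
    using integrable[OF X] integrable[OF Y] by (simp add: integral_distr[OF X f] integral_distr[OF Y f])
  also have "\<bar>\<dots>\<bar> \<le> (\<integral>x. \<bar>f (X x) - f (Y x)\<bar> \<partial>M)"
    by (rule integral_abs_bound)
  also have "\<dots> \<le> c"
    using integrable[OF X] integrable[OF Y] close by (intro integral_le_const) auto
  finally show ?thesis .
qed

lemma tendsto_integral_distr_diff_subgraph_space:
  fixes X Y :: "nat \<Rightarrow> 'a \<Rightarrow> 'e set" and f :: "'e set \<Rightarrow> real"
  assumes prob: "\<And>i. prob_space (\<mu> i)"
    and X: "\<And>i. X i \<in> measurable (\<mu> i) (subgraph_space E)"
    and Y: "\<And>i. Y i \<in> measurable (\<mu> i) (subgraph_space E)"
    and agree: "\<And>F. finite F \<Longrightarrow> F \<subseteq> E \<Longrightarrow>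
      eventually (\<lambda>i. \<forall>x\<in>space (\<mu> i). X i x \<inter> F = Y i x \<inter> F) sequentially"
    and f: "continuous_map (subgraph_top E) euclidean f" and bounded: "\<And>S. S \<in> Pow E \<Longrightarrow> \<bar>f S\<bar> \<le> B"
  shows "(\<lambda>i. (\<integral>S. f S \<partial>distr (\<mu> i) (subgraph_space E) (X i))
           - (\<integral>S. f S \<partial>distr (\<mu> i) (subgraph_space E) (Y i))) \<longlonglongrightarrow> 0"
proof (rule tendstoI)
  fix \<epsilon> :: real assume "\<epsilon> > 0"
  then obtain F where F: "finite F" "F \<subseteq> E"
    and close: "\<forall>S\<in>Pow E. \<forall>T\<in>cylinder E F S. dist (f S) (f T) < \<epsilon>/2"
    using continuous_map_subgraph_top_uniform[OF f, of "\<epsilon>/2"] by auto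
  from agree[OF F]
  show "eventually (\<lambda>i. dist ((\<integral>S. f S \<partial>distr (\<mu> i) (subgraph_space E) (X i))
         - (\<integral>S. f S \<partial>distr (\<mu> i) (subgraph_space E) (Y i))) 0 < \<epsilon>) sequentially"
  proof (rule eventually_mono)
    fix i assume agree_i: "\<forall>x\<in>space (\<mu> i). X i x \<inter> F = Y i x \<inter> F"
    have "\<bar>(\<integral>S. f S \<partial>distr (\<mu> i) (subgraph_space E) (X i))
         - (\<integral>S. f S \<partial>distr (\<mu> i) (subgraph_space E) (Y i))\<bar> \<le> \<epsilon>/2"
    proof (rule prob_space.abs_integral_distr_diff_le[OF prob X Y])
      show "f \<in> borel_measurable (subgraph_space E)"
        using f by (rule borel_measurable_continuous_map_subgraph_top)
      show "\<bar>f S\<bar> \<le> B" if "S \<in> space (subgraph_space E)" for S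
        using that bounded by (simp add: space_subgraph_space)
      fix x assume "x \<in> space (\<mu> i)"
      then have "X i x \<in> Pow E" "Y i x \<in> cylinder E F (X i x)"
        using agree_i measurable_space[OF X] measurable_space[OF Y]
        by (auto simp: space_subgraph_space cylinder_def)
      then show "\<bar>f (X i x) - f (Y i x)\<bar> \<le> \<epsilon>/2"
        using close by (force simp: dist_real_def)
    qed
    then show "dist ((\<integral>S. f S \<partial>distr (\<mu> i) (subgraph_space E) (X i))
         - (\<integral>S. f S \<partial>distr (\<mu> i) (subgraph_space E) (Y i))) 0 < \<epsilon>"
      using \<open>\<epsilon> > 0\<close> by simp
  qed
qed

lemma weak_star_conv_iff_eventually_agree:
  fixes X Y :: "nat \<Rightarrow> 'a \<Rightarrow> 'e set"
  assumes prob: "\<And>i. prob_space (\<mu> i)"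
    and X: "\<And>i. X i \<in> measurable (\<mu> i) (subgraph_space E)"
    and Y: "\<And>i. Y i \<in> measurable (\<mu> i) (subgraph_space E)"
    and agree: "\<And>F. finite F \<Longrightarrow> F \<subseteq> E \<Longrightarrow>
      eventually (\<lambda>i. \<forall>x\<in>space (\<mu> i). X i x \<inter> F = Y i x \<inter> F) sequentially"
  shows "weak_star_conv E (\<lambda>i. distr (\<mu> i) (subgraph_space E) (X i)) \<nu> \<longleftrightarrow>
         weak_star_conv E (\<lambda>i. distr (\<mu> i) (subgraph_space E) (Y i)) \<nu>"
proof -
  have "(\<lambda>i. \<integral>S. f S \<partial>distr (\<mu> i) (subgraph_space E) (X i)) \<longlonglongrightarrow> L \<longleftrightarrow>
        (\<lambda>i. \<integral>S. f S \<partial>distr (\<mu> i) (subgraph_space E) (Y i)) \<longlonglongrightarrow> L"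
    if "continuous_map (subgraph_top E) euclideanreal f" and "\<forall>S\<in>Pow E. \<bar>f S\<bar> \<le> B" for f B L
  proof -
    from that(2) have diff: "(\<lambda>i. (\<integral>S. f S \<partial>distr (\<mu> i) (subgraph_space E) (X i))
           - (\<integral>S. f S \<partial>distr (\<mu> i) (subgraph_space E) (Y i))) \<longlonglongrightarrow> 0"
      by (intro tendsto_integral_distr_diff_subgraph_space[OF prob X Y agree that(1)]) auto
    moreover have "(\<lambda>i. (\<integral>S. f S \<partial>distr (\<mu> i) (subgraph_space E) (Y i))
           - (\<integral>S. f S \<partial>distr (\<mu> i) (subgraph_space E) (X i))) \<longlonglongrightarrow> 0"
      using tendsto_minus[OF diff] by simp
    ultimately show ?thesis by (blast intro: Lim_transform)
  qed
  then show ?thesis unfolding weak_star_conv_def by blast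
qed

lemma measurable_lift_sub:
  "lift_sub E N \<in> measurable (subgraph_space (quot_edges E N)) (subgraph_space E)"
  by (rule measurable_subgraph_space) (auto simp: lift_sub_def)

lemma measurable_Int_const_subgraph_space:
  "(\<lambda>S. S \<inter> D) \<in> measurable (subgraph_space E) (subgraph_space E)"
  by (rule measurable_subgraph_space) (auto simp: space_subgraph_space)

lemma eventually_finite_subset_incseq:
  assumes "incseq A" "finite F" "F \<subseteq> (\<Union>i. A i)"
  shows "eventually (\<lambda>i. F \<subseteq> A i) sequentially"
proof -
  have "eventually (\<lambda>i. e \<in> A i) sequentially" if "e \<in> F" for e
  proof -
    obtain n where "e \<in> A n" using assms(3) \<open>e \<in> F\<close> by blast
    then show ?thesis
      using \<open>incseq A\<close> unfolding eventually_sequentially incseq_def by blast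
  qed
  then show ?thesis
    unfolding subset_eq by (intro eventually_ball_finite[OF assms(2)] ballI)
qed

theorem lemma4p2:
  fixes V :: "'v set" and E :: "'v set set"
    and G :: "('v \<Rightarrow> 'v) set" and Gs :: "nat \<Rightarrow> ('v \<Rightarrow> 'v) set"
    and VD :: "nat \<Rightarrow> 'v set" and ED :: "nat \<Rightarrow> 'v set set"
    and \<mu> :: "nat \<Rightarrow> 'v set set set measure" and \<nu> :: "'v set set measure"
  assumes graph: "simple_graph V E" and conn: "graph_connected V E"
    and locfin: "locally_finite V E" and ctble: "countable V"
    and subG: "subgroup G (aut_group V E)"
    and normal: "\<And>i. Gs i \<lhd> (aut_group V E)\<lparr>carrier := G\<rparr>"
    and closed: "\<And>i. closedin (perm_top V G) (Gs i)"
    and decr: "\<And>i. Gs (Suc i) \<subseteq> Gs i"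
    and amen: "\<And>i. amenable ((aut_group V E)\<lparr>carrier := G\<rparr> Mod Gs i)
                       (quot_top (perm_top V G) (carrier ((aut_group V E)\<lparr>carrier := G\<rparr> Mod Gs i)))"
    and trivial: "(\<Inter>i. Gs i) = {id}"
    and D_sub: "\<And>i. VD i \<subseteq> V \<and> ED i \<subseteq> E \<and> (\<forall>e\<in>ED i. e \<subseteq> VD i)"
    and D_conn: "\<And>i. graph_connected (VD i) (ED i)"
    and D_incr: "\<And>i. VD i \<subseteq> VD (Suc i) \<and> ED i \<subseteq> ED (Suc i)"
    and D_union: "(\<Union>i. VD i) = V" "(\<Union>i. ED i) = E"
    and D_bij: "\<And>i. bij_betw (edge_orbit (Gs i)) (ED i) (quot_edges E (Gs i))"
    and rand_i: "\<And>i. prob_space (\<mu> i)"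
    and rand_i_sets: "\<And>i. sets (\<mu> i) = sets (subgraph_space (quot_edges E (Gs i)))"
    and rand: "prob_space \<nu>" and rand_sets: "sets \<nu> = sets (subgraph_space E)"
  shows "weak_star_conv E (\<lambda>i. distr (\<mu> i) (subgraph_space E) (lift_sub E (Gs i))) \<nu>
     \<longleftrightarrow> weak_star_conv E (\<lambda>i. distr (\<mu> i) (subgraph_space E) (\<lambda>S. lift_sub E (Gs i) S \<inter> ED i)) \<nu>"
proof (rule weak_star_conv_iff_eventually_agree[OF rand_i,
      where X = "\<lambda>i. lift_sub E (Gs i)" and Y = "\<lambda>i S. lift_sub E (Gs i) S \<inter> ED i"])
  fix i
  show lift: "lift_sub E (Gs i) \<in> measurable (\<mu> i) (subgraph_space E)"
    using measurable_lift_sub by (subst measurable_cong_sets[OF rand_i_sets refl])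
  show "(\<lambda>S. lift_sub E (Gs i) S \<inter> ED i) \<in> measurable (\<mu> i) (subgraph_space E)"
    using lift measurable_Int_const_subgraph_space by (rule measurable_compose)
next
  fix F :: "'v set set" assume "finite F" "F \<subseteq> E"
  moreover have "incseq ED" using D_incr by (simp add: incseq_SucI)
  ultimately have "eventually (\<lambda>i. F \<subseteq> ED i) sequentially"
    using D_union(2) by (intro eventually_finite_subset_incseq) auto
  then show "eventually (\<lambda>i. \<forall>S\<in>space (\<mu> i).
      lift_sub E (Gs i) S \<inter> F = (lift_sub E (Gs i) S \<inter> ED i) \<inter> F) sequentially"
    by (rule eventually_mono) blast
qed

end
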